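(* Let $d\ge1$, $n\ge2$ be integers, $\kappa_d$ the volume of the $d$-dimensional unit ball, $V\ge0$, $c\in(0,\infty)$, $-d/2<\tau_1<\dots<\tau_n$ reals, $a_i=\tau_i+d$, $x_i=\tau_i+d/2$. Let $\Sigma_n^{\mathrm{sb}}$ have entries $\frac{Vd\kappa_d}{2(x_i+x_j)}$, $\Sigma_n^{\mathrm{sp}}$ entries $\frac{Vd^2\kappa_d^2}{a_ia_j}$, and $\Sigma_n=\Sigma_n^{\mathrm{sb}}+c\Sigma_n^{\mathrm{sp}}$ if $c\le1$, $\Sigma_n=\frac1c\Sigma_n^{\mathrm{sb}}+\Sigma_n^{\mathrm{sp}}$ if $c>1$. Write $\det(\Sigma_n-\lambda I_n)=(-1)^n\lambda^n+a_n^{(n-1)}\lambda^{n-1}+\dots+a_n^{(1)}\lambda+a_n^{(0)}$. For $k\in[n-1]$ and $I=\{i_1<\dots<i_{n-k}\}\subseteq[n]$ define $$D(I)=\Bigg(1+\sum_{j\in I}\frac{cd\kappa_d}{a_j}\Bigg(\frac{4x_j\prod_{m\in I\setminus\{j\}}(x_m+x_j)^2}{a_j\prod_{m\in I\setminus\{j\}}(x_m-x_j)^2}-\sum_{i\in I\setminus\{j\}}\frac{8x_ix_j(x_i+x_j)\prod_{l\in I\setminus\{i,j\},\,m\in\{i,j\}}(x_m+x_l)}{a_i(x_j-x_i)^2\prod_{l\in I\setminus\{i,j\},\,m\in\{i,j\}}(x_m-x_l)}\Bigg)\Bigg)\frac{\prod_{i<j\in I}(x_i-x_j)^2}{\prod_{i,j\in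 I}(x_i+x_j)},$$ and $D_k=\sum_{I\subseteq[n],\,|I|=n-k}D(I)$. Then $a_n^{(k)}=(-1)^kD_k\big(\frac{Vd\kappa_d}{2}\big)^{n-k}$ for $c\in(0,1]$, and $a_n^{(k)}=(-1)^kD_k\big(\frac{Vd\kappa_d}{2c}\big)^{n-k}$ for $c\in(1,\infty)$, for all $k\in[n-1]$.
   Context: $\Sigma_n$ is the asymptotic covariance matrix of normalized length power functionals in the critical regime. $[n]=\{1,\dots,n\}$. *)

theory Defs
  imports "HOL-Analysis.Ball_Volume" "Jordan_Normal_Form.Determinant"
begin

text \<open>Indices are shifted: the paper's index set [n] = {1..n} is rendered as {0..<n}.\<close>

definition kappa :: "nat \<Rightarrow> real" where
  "kappa d = unit_ball_vol (real d)"

definition aa :: "nat \<Rightarrow> (nat \<Rightarrow> real) \<Rightarrow> nat \<Rightarrow> real" where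
  "aa d tau i = tau i + real d"

definition xx :: "nat \<Rightarrow> (nat \<Rightarrow> real) \<Rightarrow> nat \<Rightarrow> real" where
  "xx d tau i = tau i + real d / 2"

definition Sigma_sb :: "nat \<Rightarrow> nat \<Rightarrow> real \<Rightarrow> (nat \<Rightarrow> real) \<Rightarrow> real mat" where
  "Sigma_sb n d V tau = mat n n (\<lambda>(i,j). V * real d * kappa d / (2 * (xx d tau i + xx d tau j)))"

definition Sigma_sp :: "nat \<Rightarrow> nat \<Rightarrow> real \<Rightarrow> (nat \<Rightarrow> real) \<Rightarrow> real mat" where
  "Sigma_sp n d V tau = mat n n (\<lambda>(i,j). V * (real d)^2 * (kappa d)^2 / (aa d tau i * aa d tau j))"

definition Sigma_n :: "nat \<Rightarrow> nat \<Rightarrow> real \<Rightarrow> real \<Rightarrow> (nat \<Rightarrow> real) \<Rightarrow> real mat" where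
  "Sigma_n n d V c tau =
     (if c \<le> 1 then Sigma_sb n d V tau + c \<cdot>\<^sub>m Sigma_sp n d V tau
      else (1 / c) \<cdot>\<^sub>m Sigma_sb n d V tau + Sigma_sp n d V tau)"

definition det_shift_poly :: "nat \<Rightarrow> real mat \<Rightarrow> real poly" where
  "det_shift_poly n A = Determinant.det (mat n n (\<lambda>(i,j). [:A $$ (i,j):] - (if i = j then [:0, 1:] else 0)))"

definition DI :: "nat \<Rightarrow> real \<Rightarrow> (nat \<Rightarrow> real) \<Rightarrow> nat set \<Rightarrow> real" where
  "DI d c tau I =
    (let x = xx d tau; a = aa d tau in
     (1 + (\<Sum>j\<in>I. c * real d * kappa d / a j *
        (4 * x j * (\<Prod>m\<in>I - {j}. (x m + x j)^2) / (a j * (\<Prod>m\<in>I - {j}. (x m - x j)^2))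
         - (\<Sum>i\<in>I - {j}. 8 * x i * x j * (x i + x j) *
               (\<Prod>l\<in>I - {i,j}. \<Prod>m\<in>{i,j}. (x m + x l))
             / (a i * (x j - x i)^2 * (\<Prod>l\<in>I - {i,j}. \<Prod>m\<in>{i,j}. (x m - x l)))))))
     * (\<Prod>(i,j)\<in>{(i,j). i \<in> I \<and> j \<in> I \<and> i < j}. (x i - x j)^2)
     / (\<Prod>(i,j)\<in>I \<times> I. (x i + x j)))"

definition Dk :: "nat \<Rightarrow> nat \<Rightarrow> real \<Rightarrow> (nat \<Rightarrow> real) \<Rightarrow> nat \<Rightarrow> real" where
  "Dk n d c tau k = (\<Sum>I | I \<subseteq> {0..<n} \<and> card I = n - k. DI d c tau I)"

end

(*
  The coefficient of lambda^k in det (A - lambda I) is (-1)^k times the sum of the principal minors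
  of A of size n - k. Every entry of Sigma_n equals s (1 / (x_i + x_j) + 2 c d kappa_d / (a_i a_j)),
  with s = V d kappa_d / 2 for c <= 1 and s = V d kappa_d / (2 c) for c > 1, so each such minor is
  s^(n-k) times the determinant of a Cauchy matrix C plus a rank-one matrix u v^T. By the matrix
  determinant lemma this is det C + sum_(i,j) u_i v_j cof_ij C, and Cauchy's determinant formula
  evaluates det C and every cofactor in closed form. The diagonal and the off-diagonal terms of the
  resulting double sum are the two sums in D(I).
*)

theory Submission
  imports Defs
begin

section \<open>Row and column operations on determinants\<close>

lemma mat_cong:
  assumes "\<And>i j. i < n \<Longrightarrow> j < m \<Longrightarrow> f i j = g i j"
  shows "mat n m (\<lambda>(i,j). f i j) = mat n m (\<lambda>(i,j). g i j)"
  by (rule eq_matI) (auto simp: assms)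

lemma det_mat_leibniz:
  "det (mat n n (\<lambda>(i,j). f i j)) =
     (\<Sum>p | p permutes {0..<n}. signof p * (\<Prod>i=0..<n. f i (p i)))"
  by (subst det_def'[of _ n]) (auto intro!: sum.cong prod.cong simp: permutes_in_image)

lemma det_mat_transpose_fun:
  "det (mat n n (\<lambda>(i,j). f j i)) = det (mat n n (\<lambda>(i,j). f i j))"
proof -
  have "mat n n (\<lambda>(i,j). f j i) = transpose_mat (mat n n (\<lambda>(i,j). f i j))"
    by (rule eq_matI) auto
  then show ?thesis
    using det_transpose[of "mat n n (\<lambda>(i,j). f i j)" n] by simp
qed

lemma det_mat_scale_rows_cols:
  "det (mat n n (\<lambda>(i,j). a i * b j * f i j)) =
     prod a {0..<n} * prod b {0..<n} * det (mat n n (\<lambda>(i,j). f i j))"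
proof -
  have "signof p * (\<Prod>i=0..<n. a i * b (p i) * f i (p i)) =
          prod a {0..<n} * prod b {0..<n} * (signof p * (\<Prod>i=0..<n. f i (p i)))"
    if p: "p permutes {0..<n}" for p
  proof -
    have "(\<Prod>i=0..<n. b (p i)) = prod b {0..<n}"
      using prod.permute[OF p, of b] by (simp add: comp_def)
    then show ?thesis
      by (simp add: prod.distrib)
  qed
  then show ?thesis
    unfolding det_mat_leibniz by (simp add: sum_distrib_left)
qed

lemma det_mat_add_row_multiples:
  assumes k: "k < n" and ck: "c k = 0"
  shows "det (mat n n (\<lambda>(i,j). f i j + c i * f k j)) = det (mat n n (\<lambda>(i,j). f i j))"
proof -
  define A where "A t = mat n n (\<lambda>(i,j). f i j + (if i < t then c i else 0) * f k j)" for t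
  have "det (A t) = det (A 0)" for t
  proof (induction t)
    case (Suc t)
    show ?case
    proof (cases "t < n \<and> t \<noteq> k")
      case True
      then have "A (Suc t) = addrow (c t) t k (A t)"
        by (intro eq_matI) (auto simp: A_def mat_addrow_def ck k algebra_simps)
      then show ?thesis
        using Suc det_addrow[of k n t "A t" "c t"] True k by (simp add: A_def)
    next
      case False
      then have "A (Suc t) = A t"
        by (intro eq_matI) (auto simp: A_def ck elim!: less_SucE)
      then show ?thesis
        using Suc by simp
    qed
  qed simp
  moreover have "A 0 = mat n n (\<lambda>(i,j). f i j)"
    unfolding A_def by (rule mat_cong) simp
  moreover have "A n = mat n n (\<lambda>(i,j). f i j + c i * f k j)"
    unfolding A_def by (rule mat_cong) simp
  ultimately show ?thesis
    by metis
qed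

lemma det_mat_add_col_multiples:
  assumes "k < n" and "c k = 0"
  shows "det (mat n n (\<lambda>(i,j). f i j + c j * f i k)) = det (mat n n (\<lambda>(i,j). f i j))"
  using det_mat_add_row_multiples[of k n c "\<lambda>i j. f j i", OF assms]
    det_mat_transpose_fun[of n "\<lambda>i j. f j i + c i * f j k"] det_mat_transpose_fun[of n f]
  by simp

lemma det_mat_Suc_unit_last_row:
  assumes "\<And>j. j < n \<Longrightarrow> f n j = 0" and "f n n = 1"
  shows "det (mat (Suc n) (Suc n) (\<lambda>(i,j). f i j)) = det (mat n n (\<lambda>(i,j). f i j))"
proof -
  let ?A = "mat (Suc n) (Suc n) (\<lambda>(i,j). f i j)"
  have "det ?A = (\<Sum>j<Suc n. ?A $$ (n,j) * cofactor ?A n j)"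
    by (rule laplace_expansion_row) auto
  also have "\<dots> = cofactor ?A n n"
    using assms by (simp add: sum.lessThan_Suc)
  also have "mat_delete ?A n n = mat n n (\<lambda>(i,j). f i j)"
    by (rule eq_matI) (auto simp: mat_delete_def)
  then have "cofactor ?A n n = det (mat n n (\<lambda>(i,j). f i j))"
    by (simp add: cofactor_def)
  finally show ?thesis .
qed

lemma det_mat_replace_row:
  assumes t: "t < n"
  shows "det (mat n n (\<lambda>(i,j). if i = t then v j else f i j)) =
           (\<Sum>j<n. v j * cofactor (mat n n (\<lambda>(i,j). f i j)) t j)"
proof -
  let ?R = "mat n n (\<lambda>(i,j). if i = t then v j else f i j)"
  have "det ?R = (\<Sum>j<n. ?R $$ (t,j) * cofactor ?R t j)"
    by (rule laplace_expansion_row) (use t in auto)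
  also have "\<dots> = (\<Sum>j<n. v j * cofactor (mat n n (\<lambda>(i,j). f i j)) t j)"
  proof (rule sum.cong[OF refl])
    fix j assume j: "j \<in> {..<n}"
    have "mat_delete ?R t j = mat_delete (mat n n (\<lambda>(i,j). f i j)) t j"
      by (rule eq_matI) (use t j in \<open>auto simp: mat_delete_def\<close>)
    then show "?R $$ (t,j) * cofactor ?R t j = v j * cofactor (mat n n (\<lambda>(i,j). f i j)) t j"
      using t j by (simp add: cofactor_def)
  qed
  finally show ?thesis .
qed

lemma cofactor_expansion_rank_one_rows:
  assumes t: "t < n"
  shows "(\<Sum>j<n. v j * cofactor (mat n n (\<lambda>(i,j). f i j + (if i < t then u i * v j else 0))) t j) =
           (\<Sum>j<n. v j * cofactor (mat n n (\<lambda>(i,j). f i j)) t j)"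
proof -
  \<comment> \<open>once row t is v, the rows above it can be cleared of their multiples of v\<close>
  define h where "h i j = (if i = t then v j else f i j + (if i < t then u i * v j else 0))" for i j
  have "(\<Sum>j<n. v j * cofactor (mat n n (\<lambda>(i,j). f i j + (if i < t then u i * v j else 0))) t j) =
          det (mat n n (\<lambda>(i,j). h i j))"
    by (simp add: h_def det_mat_replace_row[OF t])
  also have "\<dots> = det (mat n n (\<lambda>(i,j). h i j + (if i < t then - u i else 0) * h t j))"
    by (rule det_mat_add_row_multiples[OF t, symmetric]) simp
  also have "mat n n (\<lambda>(i,j). h i j + (if i < t then - u i else 0) * h t j) =
               mat n n (\<lambda>(i,j). if i = t then v j else f i j)"
    by (rule mat_cong) (simp add: h_def)
  finally show ?thesis
    by (simp add: det_mat_replace_row[OF t])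
qed

lemma det_mat_rank_one_update:
  "det (mat n n (\<lambda>(i,j). f i j + u i * v j)) =
     det (mat n n (\<lambda>(i,j). f i j)) +
     (\<Sum>i<n. \<Sum>j<n. u i * v j * cofactor (mat n n (\<lambda>(i,j). f i j)) i j)"
proof -
  let ?C = "mat n n (\<lambda>(i,j). f i j)"
  define g where "g t i j = f i j + (if i < t then u i * v j else 0)" for t i j
  have "det (mat n n (\<lambda>(i,j). g t i j)) = det ?C + (\<Sum>i<t. \<Sum>j<n. u i * v j * cofactor ?C i j)"
    if "t \<le> n" for t
    using that
  proof (induction t)
    case 0
    then show ?case
      by (simp add: g_def)
  next
    case (Suc t)
    then have t: "t < n"
      by simp
    let ?M = "mat n n (\<lambda>(i,j). g t i j)"
    have row_t: "?M = mat n n (\<lambda>(i,j). if i = t then f t j else g t i j)"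
      by (rule mat_cong) (simp add: g_def)
    have "mat n n (\<lambda>(i,j). g (Suc t) i j) =
            mat n n (\<lambda>(i,j). if i = t then f t j + u t * v j else g t i j)"
      by (rule mat_cong) (auto simp: g_def)
    then have "det (mat n n (\<lambda>(i,j). g (Suc t) i j)) =
                 (\<Sum>j<n. f t j * cofactor ?M t j) + u t * (\<Sum>j<n. v j * cofactor ?M t j)"
      by (simp add: det_mat_replace_row[OF t] algebra_simps sum.distrib sum_distrib_left)
    also have "(\<Sum>j<n. f t j * cofactor ?M t j) = det ?M"
      by (subst (2) row_t) (simp add: det_mat_replace_row[OF t])
    also have "(\<Sum>j<n. v j * cofactor ?M t j) = (\<Sum>j<n. v j * cofactor ?C t j)"
      unfolding g_def by (rule cofactor_expansion_rank_one_rows[OF t])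
    finally show ?case
      using Suc by (simp add: sum_distrib_left mult.assoc)
  qed
  note this[OF order_refl]
  moreover have "mat n n (\<lambda>(i,j). g n i j) = mat n n (\<lambda>(i,j). f i j + u i * v j)"
    by (rule mat_cong) (simp add: g_def)
  ultimately show ?thesis
    by simp
qed

section \<open>Cauchy's determinant\<close>

definition vandermonde_prod :: "(nat \<Rightarrow> 'a::comm_ring_1) \<Rightarrow> nat \<Rightarrow> 'a" where
  "vandermonde_prod x n = (\<Prod>j<n. \<Prod>i<j. x j - x i)"

lemma prod_lessThan_Suc_if_less:
  "(\<Prod>i\<in>{0..<Suc n}. if i < n then f i else 1) = (\<Prod>i<n. f i)"
  by (simp add: prod.atLeast0_lessThan_Suc atLeast0LessThan)

lemma det_cauchy_mat_Suc_reduce_rows: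
  fixes x y :: "nat \<Rightarrow> 'a::field"
  assumes nz: "\<And>i j. i \<le> n \<Longrightarrow> j \<le> n \<Longrightarrow> x i + y j \<noteq> 0"
  shows "det (mat (Suc n) (Suc n) (\<lambda>(i,j). 1 / (x i + y j))) =
           (\<Prod>i<n. x n - x i) / ((\<Prod>j<n. x n + y j) * (x n + y n)) *
           det (mat (Suc n) (Suc n) (\<lambda>(i,j). if i < n then 1 / (x i + y j) else 1))"
proof -
  define c where "c i = (if i < n then -1 else 0 :: 'a)" for i
  have "det (mat (Suc n) (Suc n) (\<lambda>(i,j). 1 / (x i + y j))) =
          det (mat (Suc n) (Suc n) (\<lambda>(i,j). 1 / (x i + y j) + c i * (1 / (x n + y j))))"
    by (rule det_mat_add_row_multiples[symmetric]) (auto simp: c_def)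
  also have "\<dots> = det (mat (Suc n) (Suc n) (\<lambda>(i,j). (if i < n then x n - x i else 1) *
                    (1 / (x n + y j)) * (if i < n then 1 / (x i + y j) else 1)))"
  proof (intro arg_cong[where f = det] mat_cong)
    fix i j assume "i < Suc n" "j < Suc n"
    then have "x i + y j \<noteq> 0" "x n + y j \<noteq> 0" "i < n \<or> i = n"
      using nz by auto
    then show "1 / (x i + y j) + c i * (1 / (x n + y j)) = (if i < n then x n - x i else 1) *
                 (1 / (x n + y j)) * (if i < n then 1 / (x i + y j) else 1)"
      by (elim disjE) (simp_all add: c_def field_simps)
  qed
  also have "\<dots> = (\<Prod>i=0..<Suc n. if i < n then x n - x i else 1) * (\<Prod>j=0..<Suc n. 1 / (x n + y j)) *
                     det (mat (Suc n) (Suc n) (\<lambda>(i,j). if i < n then 1 / (x i + y j) else 1))"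
    by (rule det_mat_scale_rows_cols)
  finally show ?thesis
    by (simp add: prod_lessThan_Suc_if_less prod_dividef atLeast0LessThan[symmetric]
        prod.atLeast0_lessThan_Suc)
qed

lemma det_cauchy_mat_Suc_reduce_cols:
  fixes x y :: "nat \<Rightarrow> 'a::field"
  assumes nz: "\<And>i j. i \<le> n \<Longrightarrow> j \<le> n \<Longrightarrow> x i + y j \<noteq> 0"
  shows "det (mat (Suc n) (Suc n) (\<lambda>(i,j). if i < n then 1 / (x i + y j) else 1)) =
           (\<Prod>j<n. y n - y j) / (\<Prod>i<n. x i + y n) * det (mat n n (\<lambda>(i,j). 1 / (x i + y j)))"
proof -
  define c where "c i = (if i < n then -1 else 0 :: 'a)" for i
  define H where "H i j = (if i < n then 1 / (x i + y j) else 1)" for i j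
  define K where "K i j = (if i < n then if j < n then 1 / (x i + y j) else 1
                           else if j < n then 0 else 1 :: 'a)" for i j
  have "det (mat (Suc n) (Suc n) (\<lambda>(i,j). H i j)) =
          det (mat (Suc n) (Suc n) (\<lambda>(i,j). H i j + c j * H i n))"
    by (rule det_mat_add_col_multiples[symmetric]) (auto simp: c_def)
  also have "\<dots> = det (mat (Suc n) (Suc n) (\<lambda>(i,j).
           (if i < n then 1 / (x i + y n) else 1) * (if j < n then y n - y j else 1) * K i j))"
  proof (intro arg_cong[where f = det] mat_cong)
    fix i j assume "i < Suc n" "j < Suc n"
    then have "x i + y j \<noteq> 0" "x i + y n \<noteq> 0" "i < n \<or> i = n" "j < n \<or> j = n"
      using nz by auto
    then show "H i j + c j * H i n =
           (if i < n then 1 / (x i + y n) else 1) * (if j < n then y n - y j else 1) * K i j"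
      by (elim disjE) (simp_all add: c_def H_def K_def field_simps)
  qed
  also have "\<dots> = (\<Prod>i=0..<Suc n. if i < n then 1 / (x i + y n) else 1) *
                    (\<Prod>j=0..<Suc n. if j < n then y n - y j else 1) *
                    det (mat (Suc n) (Suc n) (\<lambda>(i,j). K i j))"
    by (rule det_mat_scale_rows_cols)
  also have "det (mat (Suc n) (Suc n) (\<lambda>(i,j). K i j)) = det (mat n n (\<lambda>(i,j). 1 / (x i + y j)))"
    by (subst det_mat_Suc_unit_last_row) (auto simp: K_def intro!: arg_cong[where f = det] mat_cong)
  finally show ?thesis
    by (simp add: H_def prod_lessThan_Suc_if_less prod_dividef atLeast0LessThan)
qed

lemma det_cauchy_mat:
  fixes x y :: "nat \<Rightarrow> 'a::field"
  assumes "\<And>i j. i < n \<Longrightarrow> j < n \<Longrightarrow> x i + y j \<noteq> 0"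
  shows "det (mat n n (\<lambda>(i,j). 1 / (x i + y j))) =
           vandermonde_prod x n * vandermonde_prod y n / (\<Prod>i<n. \<Prod>j<n. x i + y j)"
  using assms
proof (induction n)
  case 0
  then show ?case
    by (simp add: vandermonde_prod_def det_def)
next
  case (Suc n)
  then have nz: "x i + y j \<noteq> 0" if "i \<le> n" "j \<le> n" for i j
    using that by auto
  have "(\<Prod>i<Suc n. \<Prod>j<Suc n. x i + y j) =
          (\<Prod>i<n. \<Prod>j<n. x i + y j) * ((\<Prod>i<n. x i + y n) * ((\<Prod>j<n. x n + y j) * (x n + y n)))"
    by (simp add: prod.distrib)
  moreover have "vandermonde_prod x (Suc n) = vandermonde_prod x n * (\<Prod>i<n. x n - x i)"
    "vandermonde_prod y (Suc n) = vandermonde_prod y n * (\<Prod>j<n. y n - y j)"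
    by (simp_all add: vandermonde_prod_def)
  ultimately show ?case
    using Suc
    by (simp add: det_cauchy_mat_Suc_reduce_rows[OF nz] det_cauchy_mat_Suc_reduce_cols[OF nz] mult_ac)
qed

section \<open>Principal minors and the characteristic polynomial\<close>

definition principal_minor :: "(nat \<Rightarrow> nat \<Rightarrow> 'a::comm_ring_1) \<Rightarrow> nat set \<Rightarrow> 'a" where
  "principal_minor f I = (\<Sum>p | p permutes I. signof p * (\<Prod>i\<in>I. f i (p i)))"

lemma principal_minor_cong:
  assumes "\<And>i j. i \<in> I \<Longrightarrow> j \<in> I \<Longrightarrow> f i j = g i j"
  shows "principal_minor f I = principal_minor g I"
  unfolding principal_minor_def
  by (intro sum.cong refl arg_cong2[where f = "(*)"] prod.cong) (auto simp: assms permutes_in_image)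

lemma principal_minor_scale:
  "principal_minor (\<lambda>i j. s * f i j) I = s ^ card I * principal_minor f I"
  unfolding principal_minor_def by (simp add: prod.distrib sum_distrib_left algebra_simps)

lemma principal_minor_reindex:
  assumes e: "bij_betw e {0..<m} I"
  shows "principal_minor f I = det (mat m m (\<lambda>(r,s). f (e r) (e s)))"
proof -
  let ?A = "{0..<m}"
  have inj: "inj_on e ?A"
    using e by (rule bij_betw_imp_inj_on)
  have "bij_betw (map_permutation ?A e) {q. q permutes ?A} {p. p permutes I}"
  proof -
    have "map_permutation ?A e = (\<lambda>q x. if x \<in> I then e (q (inv_into ?A e x)) else x)"
      using e by (auto simp: fun_eq_iff map_permutation_def restrict_id_def bij_betw_def)
    then show ?thesis
      using bij_betw_permutations[OF e] by simp
  qed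
  then have "principal_minor f I =
      (\<Sum>q | q permutes ?A. signof (map_permutation ?A e q) *
                             (\<Prod>i\<in>I. f i (map_permutation ?A e q i)))"
    unfolding principal_minor_def by (rule sum.reindex_bij_betw[symmetric])
  also have "\<dots> = (\<Sum>q | q permutes ?A. signof q * (\<Prod>r\<in>?A. f (e r) (e (q r))))"
  proof (rule sum.cong[OF refl])
    fix q assume q: "q \<in> {q. q permutes ?A}"
    have "(\<Prod>i\<in>I. f i (map_permutation ?A e q i)) = (\<Prod>r\<in>?A. f (e r) (map_permutation ?A e q (e r)))"
      by (rule prod.reindex_bij_betw[OF e, symmetric])
    also have "\<dots> = (\<Prod>r\<in>?A. f (e r) (e (q r)))"
      by (intro prod.cong refl) (simp add: map_permutation_apply[OF inj])
    finally show "signof (map_permutation ?A e q) * (\<Prod>i\<in>I. f i (map_permutation ?A e q i)) =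
                    signof q * (\<Prod>r\<in>?A. f (e r) (e (q r)))"
      using q by (simp add: sign_map_permutation[OF inj])
  qed
  also have "\<dots> = det (mat m m (\<lambda>(r,s). f (e r) (e s)))"
    by (simp add: det_mat_leibniz)
  finally show ?thesis .
qed

lemma sum_permutes_fixing:
  assumes "S \<subseteq> N" and "finite N"
  shows "(\<Sum>p | p permutes N. if \<forall>i\<in>S. i = p i then g p else 0) = (\<Sum>p | p permutes N - S. g p)"
proof -
  have "{p. p permutes N \<and> (\<forall>i\<in>S. i = p i)} = {p. p permutes N - S}"
  proof (intro Collect_cong iffI)
    fix p assume p: "p permutes N \<and> (\<forall>i\<in>S. i = p i)"
    show "p permutes N - S"
      unfolding permutes_def
    proof (intro conjI allI impI)
      show "p x = x" if "x \<notin> N - S" for x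
        using that p permutes_not_in[of p N x] by auto
      show "\<exists>!x. p x = y" for y
        using p unfolding permutes_def by blast
    qed
  next
    fix p assume "p permutes N - S"
    then show "p permutes N \<and> (\<forall>i\<in>S. i = p i)"
      using permutes_subset[of p "N - S" N] permutes_not_in[of p "N - S"] by auto
  qed
  then show ?thesis
    using assms by (simp add: sum.inter_filter[symmetric] finite_permutations)
qed

lemma sum_subsets_card_complement:
  assumes "finite N" and "k \<le> card N"
  shows "(\<Sum>S | S \<subseteq> N \<and> card S = k. g (N - S)) = (\<Sum>I | I \<subseteq> N \<and> card I = card N - k. g I)"
proof (rule sum.reindex_bij_witness[where i = "\<lambda>I. N - I" and j = "\<lambda>S. N - S"])
  fix I assume "I \<in> {I. I \<subseteq> N \<and> card I = card N - k}"
  then show "N - I \<in> {S. S \<subseteq> N \<and> card S = k}" "N - (N - I) = I"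
    using assms by (auto simp: card_Diff_subset finite_subset)
qed (use assms in \<open>auto simp: card_Diff_subset finite_subset\<close>)

lemma prod_minus_X_if:
  assumes "finite S"
  shows "(\<Prod>i\<in>S. - (if P i then [:0, 1:] else 0)) =
           (if \<forall>i\<in>S. P i then monom ((-1)^card S) (card S) else (0 :: 'a::comm_ring_1 poly))"
proof (cases "\<forall>i\<in>S. P i")
  case True
  have "[:0, -1:] = monom (-1 :: 'a) 1"
    by (simp add: monom_Suc monom_0)
  moreover have "(\<Prod>i\<in>S. - (if P i then [:0, 1:] else 0)) = (\<Prod>i\<in>S. - [:0, 1:] :: 'a poly)"
    using True by (intro prod.cong) auto
  ultimately show ?thesis
    using True by (simp add: monom_power)
next
  case False
  then have "(\<Prod>i\<in>S. - (if P i then [:0, 1:] else 0)) = (0 :: 'a poly)"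
    using assms by (intro prod_zero) auto
  then show ?thesis
    by (simp only: if_not_P[OF False])
qed

lemma coeff_prod_const_minus_X:
  fixes a :: "'b \<Rightarrow> 'a::comm_ring_1"
  assumes "finite N"
  shows "coeff (\<Prod>i\<in>N. [:a i:] - (if P i then [:0, 1:] else 0)) k =
           (-1)^k * (\<Sum>S | S \<subseteq> N \<and> card S = k. if \<forall>i\<in>S. P i then \<Prod>i\<in>N - S. a i else 0)"
proof -
  have coeff_term: "coeff ((if Q then monom ((-1)^m) m else 0) * [:b:]) k =
                      (if m = k then if Q then (-1)^k * b else 0 else 0)" for Q m and b :: 'a
    by (auto simp: coeff_monom_mult coeff_pCons split: nat.split)
  have "(\<Prod>i\<in>N. [:a i:] - (if P i then [:0, 1:] else 0)) =
          (\<Sum>S\<in>Pow N. (\<Prod>i\<in>S. - (if P i then [:0, 1:] else 0)) * (\<Prod>i\<in>N - S. [:a i:]))"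
    using prod_add[OF assms, of "\<lambda>i. - (if P i then [:0, 1:] else 0)" "\<lambda>i. [:a i:]"]
    by (simp add: add.commute)
  also have "\<dots> = (\<Sum>S\<in>Pow N. (if \<forall>i\<in>S. P i then monom ((-1)^card S) (card S) else 0) *
                                 [:\<Prod>i\<in>N - S. a i:])"
    using assms by (intro sum.cong refl) (simp add: prod_minus_X_if prod_to_poly finite_subset)
  finally have "coeff (\<Prod>i\<in>N. [:a i:] - (if P i then [:0, 1:] else 0)) k =
      (\<Sum>S\<in>Pow N. if card S = k then if \<forall>i\<in>S. P i then (-1)^k * (\<Prod>i\<in>N - S. a i) else 0 else 0)"
    by (simp only: coeff_sum coeff_term)
  also have "\<dots> = (\<Sum>S | S \<subseteq> N \<and> card S = k. if \<forall>i\<in>S. P i then (-1)^k * (\<Prod>i\<in>N - S. a i) else 0)"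
    using assms by (simp add: sum.inter_filter[symmetric] Pow_def conj_commute)
  finally show ?thesis
    by (simp add: sum_distrib_left if_distrib cong: if_cong)
qed

lemma coeff_det_const_minus_X:
  fixes f :: "nat \<Rightarrow> nat \<Rightarrow> 'a::comm_ring_1"
  assumes "k \<le> n"
  shows "coeff (det (mat n n (\<lambda>(i,j). [:f i j:] - (if i = j then [:0, 1:] else 0)))) k =
           (-1)^k * (\<Sum>I | I \<subseteq> {0..<n} \<and> card I = n - k. principal_minor f I)"
proof -
  let ?N = "{0..<n}"
  have coeff_signof: "coeff (signof p * q) k = signof p * coeff q k" for p and q :: "'a poly"
    by (simp add: sign_def)
  have "coeff (det (mat n n (\<lambda>(i,j). [:f i j:] - (if i = j then [:0, 1:] else 0)))) k =
      (\<Sum>p | p permutes ?N. signof p * coeff (\<Prod>i\<in>?N. [:f i (p i):] - (if i = p i then [:0, 1:] else 0)) k)"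
    by (simp add: det_mat_leibniz coeff_sum coeff_signof)
  also have "\<dots> = (\<Sum>p | p permutes ?N. signof p * ((-1)^k * (\<Sum>S | S \<subseteq> ?N \<and> card S = k.
                     if \<forall>i\<in>S. i = p i then \<Prod>i\<in>?N - S. f i (p i) else 0)))"
    by (simp only: coeff_prod_const_minus_X[OF finite_atLeastLessThan])
  also have "\<dots> = (-1)^k * (\<Sum>p | p permutes ?N. \<Sum>S | S \<subseteq> ?N \<and> card S = k.
                     if \<forall>i\<in>S. i = p i then signof p * (\<Prod>i\<in>?N - S. f i (p i)) else 0)"
    by (simp add: sum_distrib_left if_distrib ac_simps cong: if_cong)
  also have "\<dots> = (-1)^k * (\<Sum>S | S \<subseteq> ?N \<and> card S = k. principal_minor f (?N - S))"
    by (subst sum.swap) (simp add: principal_minor_def sum_permutes_fixing)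
  also have "\<dots> = (-1)^k * (\<Sum>I | I \<subseteq> ?N \<and> card I = n - k. principal_minor f I)"
    using sum_subsets_card_complement[of ?N k "principal_minor f"] assms by simp
  finally show ?thesis .
qed

section \<open>Cauchy minors indexed by finite sets\<close>

definition vandermonde_on :: "(nat \<Rightarrow> 'a::comm_ring_1) \<Rightarrow> nat set \<Rightarrow> 'a" where
  "vandermonde_on x S = (\<Prod>(p,q)\<in>{(p,q). p \<in> S \<and> q \<in> S \<and> p < q}. x q - x p)"

definition cauchy_denom :: "(nat \<Rightarrow> 'a::comm_ring_1) \<Rightarrow> nat set \<Rightarrow> nat set \<Rightarrow> 'a" where
  "cauchy_denom x A B = (\<Prod>p\<in>A. \<Prod>q\<in>B. x p + x q)"

definition lagrange_denom :: "(nat \<Rightarrow> 'a::comm_ring_1) \<Rightarrow> nat set \<Rightarrow> nat \<Rightarrow> 'a" where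
  "lagrange_denom x S i = (\<Prod>p\<in>S - {i}. x i - x p)"

lemma prod_diff_commute:
  "(\<Prod>q\<in>R. x q - x i) = (-1) ^ card R * (\<Prod>q\<in>R. x i - x q :: 'a::comm_ring_1)"
proof -
  have "(\<Prod>q\<in>R. x q - x i) = (\<Prod>q\<in>R. (-1) * (x i - x q))"
    by simp
  then show ?thesis
    by (simp only: prod.distrib prod_constant)
qed

lemma vandermonde_on_remove:
  assumes "finite S" and "i \<in> S"
  shows "vandermonde_on x S =
           vandermonde_on x (S - {i}) * (-1) ^ card {q\<in>S. i < q} * lagrange_denom x S i"
proof -
  let ?L = "{p\<in>S. p < i}" and ?R = "{q\<in>S. i < q}"
  let ?pairs = "\<lambda>S. {(p,q). p \<in> S \<and> q \<in> S \<and> p < q}"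
  have fin: "finite (?pairs (S - {i}))" "finite ((\<lambda>p. (p,i)) ` ?L \<union> Pair i ` ?R)"
    using assms by (auto intro: finite_subset[of _ "S \<times> S"])
  have split: "?pairs S = ?pairs (S - {i}) \<union> ((\<lambda>p. (p,i)) ` ?L \<union> Pair i ` ?R)"
    using assms by auto
  have disj: "?pairs (S - {i}) \<inter> ((\<lambda>p. (p,i)) ` ?L \<union> Pair i ` ?R) = {}"
    by auto
  have "vandermonde_on x S = vandermonde_on x (S - {i}) *
      ((\<Prod>(p,q)\<in>(\<lambda>p. (p,i)) ` ?L. x q - x p) * (\<Prod>(p,q)\<in>Pair i ` ?R. x q - x p))"
    unfolding vandermonde_on_def split prod.union_disjoint[OF fin disj]
    by (subst prod.union_disjoint) (use assms in auto)
  also have "(\<Prod>(p,q)\<in>(\<lambda>p. (p,i)) ` ?L. x q - x p) = (\<Prod>p\<in>?L. x i - x p)"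
    by (simp add: prod.reindex inj_on_def)
  also have "(\<Prod>(p,q)\<in>Pair i ` ?R. x q - x p) = (\<Prod>q\<in>?R. x q - x i)"
    by (simp add: prod.reindex inj_on_def)
  also have "\<dots> = (-1) ^ card ?R * (\<Prod>q\<in>?R. x i - x q)"
    by (rule prod_diff_commute)
  also have "(\<Prod>p\<in>?L. x i - x p) * ((-1) ^ card ?R * (\<Prod>q\<in>?R. x i - x q)) =
               (-1) ^ card ?R * lagrange_denom x S i"
  proof -
    have "S - {i} = ?L \<union> ?R"
      by auto
    then have "lagrange_denom x S i = (\<Prod>p\<in>?L. x i - x p) * (\<Prod>q\<in>?R. x i - x q)"
      unfolding lagrange_denom_def using assms by (simp add: prod.union_disjoint disjoint_iff)
    then show ?thesis
      by (simp add: ac_simps)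
  qed
  finally show ?thesis
    by (simp add: mult.assoc)
qed

lemma neg_one_power_diff_diff:
  assumes "r < m" and "s < m"
  shows "(-1 :: 'a::ring_1) ^ (m - 1 - r) * (-1) ^ (m - 1 - s) = (-1) ^ (r + s)"
proof -
  have "(m - 1 - r) + (m - 1 - s) + 2 * (r + s) = 2 * (m - 1) + (r + s)"
    using assms by simp
  then have "(-1 :: 'a) ^ ((m - 1 - r) + (m - 1 - s)) * (-1) ^ (2 * (r + s)) =
               (-1) ^ (2 * (m - 1)) * (-1) ^ (r + s)"
    by (metis power_add)
  then show ?thesis
    by (simp add: power_add)
qed

text \<open>The increasing enumeration maps positions a < b to elements p < q, so Vandermonde products
  keep their signs under it.\<close>

definition sorted_nth :: "nat set \<Rightarrow> nat \<Rightarrow> nat" where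
  "sorted_nth I r = sorted_list_of_set I ! r"

lemma bij_betw_sorted_nth: "finite I \<Longrightarrow> bij_betw (sorted_nth I) {0..<card I} I"
  unfolding sorted_nth_def by (rule bij_betw_nth) (auto simp: atLeast0LessThan)

lemma sorted_nth_strict_mono:
  "finite I \<Longrightarrow> r < s \<Longrightarrow> s < card I \<Longrightarrow> sorted_nth I r < sorted_nth I s"
  unfolding sorted_nth_def using sorted_wrt_nth_less[OF strict_sorted_list_of_set, of r s I] by simp

lemma sorted_nth_less_iff:
  "finite I \<Longrightarrow> r < card I \<Longrightarrow> s < card I \<Longrightarrow> sorted_nth I r < sorted_nth I s \<longleftrightarrow> r < s"
  using sorted_nth_strict_mono[of I r s] sorted_nth_strict_mono[of I s r]
  by (cases r s rule: linorder_cases) auto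

lemma card_greater_sorted_nth:
  assumes "finite I" and r: "r < card I"
  shows "card {q\<in>I. sorted_nth I r < q} = card I - 1 - r"
proof -
  have e: "bij_betw (sorted_nth I) {0..<card I} I"
    using assms(1) by (rule bij_betw_sorted_nth)
  have "{q\<in>I. sorted_nth I r < q} = sorted_nth I ` {r<..<card I}"
  proof
    show "{q\<in>I. sorted_nth I r < q} \<subseteq> sorted_nth I ` {r<..<card I}"
    proof
      fix q assume q: "q \<in> {q\<in>I. sorted_nth I r < q}"
      then have "q \<in> sorted_nth I ` {0..<card I}"
        using e by (simp add: bij_betw_def)
      then obtain s where "s < card I" "q = sorted_nth I s"
        by auto
      then show "q \<in> sorted_nth I ` {r<..<card I}"
        using q sorted_nth_less_iff[OF assms(1) r] by auto
    qed
    show "sorted_nth I ` {r<..<card I} \<subseteq> {q\<in>I. sorted_nth I r < q}"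
      using e sorted_nth_strict_mono[OF assms(1)] by (auto dest: bij_betwE)
  qed
  moreover have "inj_on (sorted_nth I) {r<..<card I}"
    using e by (rule inj_on_subset[OF bij_betw_imp_inj_on]) auto
  ultimately show ?thesis
    by (simp add: card_image)
qed

lemma bij_betw_sorted_nth_insert_index:
  assumes "finite I" and r: "r < card I"
  shows "bij_betw (\<lambda>a. sorted_nth I (insert_index r a)) {0..<card I - 1} (I - {sorted_nth I r})"
proof -
  have e: "bij_betw (sorted_nth I) {0..<card I} I"
    using assms(1) by (rule bij_betw_sorted_nth)
  have "insert_index r ` {0..<card I - 1} = {0..<card I} - {r}"
    using insert_index_image[of r "card I - 1"] r by simp
  moreover have "inj_on (insert_index r) {0..<card I - 1}"
    by (auto simp: inj_on_def insert_index_def split: if_splits)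
  ultimately have "bij_betw (insert_index r) {0..<card I - 1} ({0..<card I} - {r})"
    by (simp add: bij_betw_def)
  moreover have "bij_betw (sorted_nth I) ({0..<card I} - {r}) (I - {sorted_nth I r})"
    by (rule bij_betw_DiffI[OF e]) (use r e in \<open>auto dest: bij_betwE\<close>)
  ultimately show ?thesis
    using bij_betw_trans by (auto simp: comp_def)
qed

lemma sorted_nth_insert_index_strict_mono:
  "finite I \<Longrightarrow> r < card I \<Longrightarrow> a < b \<Longrightarrow> b < card I - 1 \<Longrightarrow>
     sorted_nth I (insert_index r a) < sorted_nth I (insert_index r b)"
  by (rule sorted_nth_strict_mono) (auto simp: insert_index_def)

lemma vandermonde_prod_reindex:
  assumes g: "bij_betw g {0..<k} R" and mono: "\<And>a b. a < b \<Longrightarrow> b < k \<Longrightarrow> g a < g b"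
  shows "vandermonde_prod (\<lambda>a. x (g a)) k = vandermonde_on x R"
proof -
  let ?h = "inv_into {0..<k} g"
  have h: "bij_betw ?h R {0..<k}"
    using g by (rule bij_betw_inv_into)
  have less_iff: "g a < g b \<longleftrightarrow> a < b" if "a < k" "b < k" for a b
    using mono[of a b] mono[of b a] that by (cases a b rule: linorder_cases) auto
  have "vandermonde_prod (\<lambda>a. x (g a)) k = (\<Prod>(b,a)\<in>Sigma {..<k} (\<lambda>b. {..<b}). x (g b) - x (g a))"
    unfolding vandermonde_prod_def by (rule prod.Sigma) auto
  also have "\<dots> = vandermonde_on x R"
    unfolding vandermonde_on_def
  proof (rule prod.reindex_bij_witness[where i = "\<lambda>(p,q). (?h q, ?h p)" and j = "\<lambda>(b,a). (g a, g b)"])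
    fix ba assume "ba \<in> Sigma {..<k} (\<lambda>b. {..<b})"
    then obtain b a where ba: "ba = (b,a)" "b < k" "a < b"
      by auto
    then show "(\<lambda>(p,q). (?h q, ?h p)) ((\<lambda>(b,a). (g a, g b)) ba) = ba"
      using g by (simp add: bij_betw_inv_into_left)
    show "(\<lambda>(b,a). (g a, g b)) ba \<in> {(p,q). p \<in> R \<and> q \<in> R \<and> p < q}"
      using ba g mono[of a b] by (auto dest: bij_betwE)
  next
    fix pq assume "pq \<in> {(p,q). p \<in> R \<and> q \<in> R \<and> p < q}"
    then obtain p q where pq: "pq = (p,q)" "p \<in> R" "q \<in> R" "p < q"
      by auto
    have "?h p < k" "?h q < k" "g (?h p) = p" "g (?h q) = q"
      using h g pq by (auto simp: bij_betw_inv_into_right dest: bij_betwE)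
    then show "(\<lambda>(b,a). (g a, g b)) ((\<lambda>(p,q). (?h q, ?h p)) pq) = pq"
      "(\<lambda>(p,q). (?h q, ?h p)) pq \<in> Sigma {..<k} (\<lambda>b. {..<b})"
      using pq less_iff[of "?h p" "?h q"] by auto
  qed auto
  finally show ?thesis .
qed

lemma cauchy_denom_reindex:
  fixes m m' :: nat
  assumes "bij_betw g {0..<m} A" and "bij_betw h {0..<m'} B"
  shows "(\<Prod>a<m. \<Prod>b<m'. x (g a) + x (h b)) = cauchy_denom x A B"
proof -
  have "(\<Prod>b\<in>{0..<m'}. x (g a) + x (h b)) = (\<Prod>q\<in>B. x (g a) + x q)" for a
    by (rule prod.reindex_bij_betw[OF assms(2)])
  then have "(\<Prod>a<m. \<Prod>b<m'. x (g a) + x (h b)) = (\<Prod>a\<in>{0..<m}. \<Prod>q\<in>B. x (g a) + x q)"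
    unfolding atLeast0LessThan[symmetric] by simp
  also have "\<dots> = cauchy_denom x A B"
    unfolding cauchy_denom_def by (rule prod.reindex_bij_betw[OF assms(1)])
  finally show ?thesis .
qed

lemma cofactor_cauchy_mat:
  fixes x y :: "nat \<Rightarrow> 'a::field"
  assumes "\<And>i j. i < m \<Longrightarrow> j < m \<Longrightarrow> x i + y j \<noteq> 0" and "r < m" and "s < m"
  shows "cofactor (mat m m (\<lambda>(i,j). 1 / (x i + y j))) r s = (-1)^(r+s) *
           (vandermonde_prod (\<lambda>a. x (insert_index r a)) (m - 1) *
            vandermonde_prod (\<lambda>b. y (insert_index s b)) (m - 1) /
            (\<Prod>a<m - 1. \<Prod>b<m - 1. x (insert_index r a) + y (insert_index s b)))"
proof -
  have "mat_delete (mat m m (\<lambda>(i,j). 1 / (x i + y j))) r s =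
          mat (m - 1) (m - 1) (\<lambda>(a,b). 1 / (x (insert_index r a) + y (insert_index s b)))"
    by (rule eq_matI) (use assms in \<open>auto simp: mat_delete_def insert_index_def\<close>)
  moreover have "insert_index r a < m" "insert_index s a < m" if "a < m - 1" for a
    using that assms by (auto simp: insert_index_def)
  ultimately show ?thesis
    using assms by (simp add: cofactor_def det_cauchy_mat)
qed

lemma lagrange_denom_nonzero:
  fixes x :: "nat \<Rightarrow> 'a::idom"
  assumes "finite S" and "inj_on x S" and "i \<in> S"
  shows "lagrange_denom x S i \<noteq> 0"
  using assms by (auto simp: lagrange_denom_def prod_zero_iff inj_on_eq_iff)

lemma det_cauchy_mat_sorted:
  fixes x :: "nat \<Rightarrow> 'a::field"
  assumes I: "finite I" and nz: "\<And>p q. p \<in> I \<Longrightarrow> q \<in> I \<Longrightarrow> x p + x q \<noteq> 0"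
  shows "det (mat (card I) (card I) (\<lambda>(a,b). 1 / (x (sorted_nth I a) + x (sorted_nth I b)))) =
           vandermonde_on x I ^ 2 / cauchy_denom x I I"
proof -
  have e: "bij_betw (sorted_nth I) {0..<card I} I"
    using I by (rule bij_betw_sorted_nth)
  then have "x (sorted_nth I a) + x (sorted_nth I b) \<noteq> 0" if "a < card I" "b < card I" for a b
    using nz that by (auto dest: bij_betwE)
  then show ?thesis
    by (simp add: det_cauchy_mat vandermonde_prod_reindex[OF e sorted_nth_strict_mono[OF I]]
        cauchy_denom_reindex[OF e e] power2_eq_square)
qed

lemma cofactor_cauchy_mat_sorted:
  fixes x :: "nat \<Rightarrow> 'a::field"
  assumes I: "finite I" and nz: "\<And>p q. p \<in> I \<Longrightarrow> q \<in> I \<Longrightarrow> x p + x q \<noteq> 0"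
    and inj: "inj_on x I" and r: "r < card I" and s: "s < card I"
  shows "cofactor (mat (card I) (card I) (\<lambda>(a,b). 1 / (x (sorted_nth I a) + x (sorted_nth I b)))) r s =
           vandermonde_on x I ^ 2 /
           (lagrange_denom x I (sorted_nth I r) * lagrange_denom x I (sorted_nth I s) *
            cauchy_denom x (I - {sorted_nth I r}) (I - {sorted_nth I s}))"
proof -
  let ?m = "card I" and ?e = "sorted_nth I"
  let ?V = "vandermonde_on x" and ?L = "lagrange_denom x I"
  have e: "bij_betw ?e {0..<?m} I"
    using I by (rule bij_betw_sorted_nth)
  then have nz': "x (?e a) + x (?e b) \<noteq> 0" if "a < ?m" "b < ?m" for a b
    using nz that by (auto dest: bij_betwE)
  have V_delete: "vandermonde_prod (\<lambda>a. x (?e (insert_index t a))) (?m - 1) = ?V (I - {?e t})"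
    if "t < ?m" for t
    by (rule vandermonde_prod_reindex[OF bij_betw_sorted_nth_insert_index[OF I that]])
      (rule sorted_nth_insert_index_strict_mono[OF I that])
  have cof: "cofactor (mat ?m ?m (\<lambda>(a,b). 1 / (x (?e a) + x (?e b)))) r s =
          (-1)^(r+s) * (?V (I - {?e r}) * ?V (I - {?e s}) / cauchy_denom x (I - {?e r}) (I - {?e s}))"
    using cofactor_cauchy_mat[of ?m "\<lambda>a. x (?e a)" "\<lambda>a. x (?e a)", OF nz' r s]
    unfolding V_delete[OF r] V_delete[OF s] cauchy_denom_reindex[OF
        bij_betw_sorted_nth_insert_index[OF I r] bij_betw_sorted_nth_insert_index[OF I s]] .
  have V_remove: "?V I = ?V (I - {?e t}) * (-1)^(?m - 1 - t) * ?L (?e t)" if "t < ?m" for t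
    using vandermonde_on_remove[OF I, of "?e t" x] card_greater_sorted_nth[OF I that] e that
    by (auto dest: bij_betwE)
  have "?V I ^ 2 = (-1)^(r+s) * ?V (I - {?e r}) * ?V (I - {?e s}) * (?L (?e r) * ?L (?e s))"
    unfolding power2_eq_square neg_one_power_diff_diff[OF r s, symmetric]
    by (subst (1) V_remove[OF r], subst V_remove[OF s]) (simp add: algebra_simps)
  moreover have "?L (?e r) \<noteq> 0" "?L (?e s) \<noteq> 0"
    using lagrange_denom_nonzero[OF I inj] e r s by (auto dest: bij_betwE)
  ultimately show ?thesis
    unfolding cof by (simp add: field_simps)
qed

lemma principal_minor_cauchy_rank_one:
  fixes x u v :: "nat \<Rightarrow> 'a::field"
  assumes I: "finite I" and nz: "\<And>p q. p \<in> I \<Longrightarrow> q \<in> I \<Longrightarrow> x p + x q \<noteq> 0"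
    and inj: "inj_on x I"
  shows "principal_minor (\<lambda>i j. 1 / (x i + x j) + u i * v j) I =
           vandermonde_on x I ^ 2 / cauchy_denom x I I +
           (\<Sum>i\<in>I. \<Sum>j\<in>I. u i * v j * (vandermonde_on x I ^ 2 /
              (lagrange_denom x I i * lagrange_denom x I j * cauchy_denom x (I - {i}) (I - {j}))))"
proof -
  let ?m = "card I" and ?e = "sorted_nth I"
  let ?C = "mat ?m ?m (\<lambda>(a,b). 1 / (x (?e a) + x (?e b)))"
  let ?F = "\<lambda>i j. u i * v j * (vandermonde_on x I ^ 2 /
              (lagrange_denom x I i * lagrange_denom x I j * cauchy_denom x (I - {i}) (I - {j})))"
  have e: "bij_betw ?e {0..<?m} I"
    using I by (rule bij_betw_sorted_nth)
  have "principal_minor (\<lambda>i j. 1 / (x i + x j) + u i * v j) I =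
          det (mat ?m ?m (\<lambda>(a,b). 1 / (x (?e a) + x (?e b)) + u (?e a) * v (?e b)))"
    by (rule principal_minor_reindex[OF e])
  also have "\<dots> = det ?C + (\<Sum>a<?m. \<Sum>b<?m. u (?e a) * v (?e b) * cofactor ?C a b)"
    by (rule det_mat_rank_one_update)
  also have "(\<Sum>a<?m. \<Sum>b<?m. u (?e a) * v (?e b) * cofactor ?C a b) = (\<Sum>a<?m. \<Sum>b<?m. ?F (?e a) (?e b))"
    by (intro sum.cong refl) (simp add: cofactor_cauchy_mat_sorted[OF I nz inj])
  also have "\<dots> = (\<Sum>i\<in>I. \<Sum>j\<in>I. ?F i j)"
  proof -
    have "(\<Sum>b\<in>{0..<?m}. ?F (?e a) (?e b)) = (\<Sum>j\<in>I. ?F (?e a) j)" for a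
      by (rule sum.reindex_bij_betw[OF e])
    then have "(\<Sum>a<?m. \<Sum>b<?m. ?F (?e a) (?e b)) = (\<Sum>a\<in>{0..<?m}. \<Sum>j\<in>I. ?F (?e a) j)"
      unfolding atLeast0LessThan[symmetric] by simp
    also have "\<dots> = (\<Sum>i\<in>I. \<Sum>j\<in>I. ?F i j)"
      by (rule sum.reindex_bij_betw[OF e])
    finally show ?thesis .
  qed
  also have "det ?C = vandermonde_on x I ^ 2 / cauchy_denom x I I"
    by (rule det_cauchy_mat_sorted[OF I nz])
  finally show ?thesis .
qed

section \<open>The principal minors of Sigma_n\<close>

lemma cauchy_denom_split:
  assumes I: "finite I" and i: "i \<in> I" and j: "j \<in> I"
  shows "cauchy_denom x I I =
           cauchy_denom x (I - {i}) (I - {j}) * (\<Prod>q\<in>I. x i + x q) * (\<Prod>p\<in>I - {i}. x p + x j)"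
proof -
  have "cauchy_denom x I I = (\<Prod>q\<in>I. x i + x q) * (\<Prod>p\<in>I - {i}. \<Prod>q\<in>I. x p + x q)"
    unfolding cauchy_denom_def by (rule prod.remove[OF I i])
  also have "(\<Prod>p\<in>I - {i}. \<Prod>q\<in>I. x p + x q) = (\<Prod>p\<in>I - {i}. (x p + x j) * (\<Prod>q\<in>I - {j}. x p + x q))"
    by (intro prod.cong refl) (rule prod.remove[OF I j])
  also have "\<dots> = (\<Prod>p\<in>I - {i}. x p + x j) * cauchy_denom x (I - {i}) (I - {j})"
    unfolding cauchy_denom_def by (rule prod.distrib)
  finally show ?thesis
    by (simp add: ac_simps)
qed

lemma cauchy_denom_pos:
  fixes x :: "nat \<Rightarrow> 'a::linordered_field"
  shows "(\<And>p. p \<in> A \<union> B \<Longrightarrow> x p > 0) \<Longrightarrow> cauchy_denom x A B > 0"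
  unfolding cauchy_denom_def by (auto intro!: prod_pos add_pos_pos)

lemma cauchy_denom_diagonal_factor:
  assumes I: "finite I" and j: "j \<in> I"
  shows "cauchy_denom x I I =
           cauchy_denom x (I - {j}) (I - {j}) * (2 * x j * (\<Prod>m\<in>I - {j}. (x m + x j)^2))"
proof -
  have "(\<Prod>q\<in>I. x j + x q) * (\<Prod>p\<in>I - {j}. x p + x j) = 2 * x j * (\<Prod>m\<in>I - {j}. (x m + x j)^2)"
    by (simp add: prod.remove[OF I j] prod.distrib[symmetric] power2_eq_square add.commute mult.assoc)
  then show ?thesis
    by (simp add: cauchy_denom_split[OF I j j] mult.assoc)
qed

lemma lagrange_denom_square:
  "lagrange_denom x I j * lagrange_denom x I j = (\<Prod>m\<in>I - {j}. (x m - x j)^2)"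
  unfolding lagrange_denom_def by (simp add: prod.distrib[symmetric] power2_eq_square algebra_simps)

lemma cauchy_denom_off_diagonal_factor:
  assumes I: "finite I" and i: "i \<in> I" and j: "j \<in> I" and "i \<noteq> j"
  shows "cauchy_denom x I I = cauchy_denom x (I - {i}) (I - {j}) *
           (4 * x i * x j * (x i + x j) * (\<Prod>l\<in>I - {i,j}. \<Prod>m\<in>{i,j}. x m + x l))"
proof -
  have ji: "j \<in> I - {i}" and fin: "finite (I - {i})" and I_ij: "I - {i} - {j} = I - {i,j}"
    using I j \<open>i \<noteq> j\<close> by auto
  have "(\<Prod>q\<in>I. x i + x q) = 2 * x i * ((x i + x j) * (\<Prod>l\<in>I - {i,j}. x i + x l))"
    using prod.remove[OF I i, of "\<lambda>q. x i + x q"] prod.remove[OF fin ji, of "\<lambda>q. x i + x q"] I_ij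
    by simp
  moreover have "(\<Prod>p\<in>I - {i}. x p + x j) = 2 * x j * (\<Prod>l\<in>I - {i,j}. x l + x j)"
    using prod.remove[OF fin ji, of "\<lambda>p. x p + x j"] I_ij by simp
  moreover have "(\<Prod>l\<in>I - {i,j}. \<Prod>m\<in>{i,j}. x m + x l) =
                   (\<Prod>l\<in>I - {i,j}. x i + x l) * (\<Prod>l\<in>I - {i,j}. x l + x j)"
    using \<open>i \<noteq> j\<close> by (simp add: prod.distrib[symmetric] add.commute)
  ultimately show ?thesis
    by (simp add: cauchy_denom_split[OF I i j] algebra_simps)
qed

lemma lagrange_denom_mult_off_diagonal:
  assumes I: "finite I" and i: "i \<in> I" and j: "j \<in> I" and "i \<noteq> j"
  shows "lagrange_denom x I i * lagrange_denom x I j =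
           - ((x j - x i)^2 * (\<Prod>l\<in>I - {i,j}. \<Prod>m\<in>{i,j}. x m - x l))"
proof -
  have ji: "j \<in> I - {i}" and ij: "i \<in> I - {j}" and fin: "finite (I - {i})" "finite (I - {j})"
    and I_ij: "I - {i} - {j} = I - {i,j}" "I - {j} - {i} = I - {i,j}"
    using I i j \<open>i \<noteq> j\<close> by auto
  have Li: "lagrange_denom x I i = (x i - x j) * (\<Prod>l\<in>I - {i,j}. x i - x l)"
    unfolding lagrange_denom_def using prod.remove[OF fin(1) ji, of "\<lambda>p. x i - x p"] I_ij by simp
  have Lj: "lagrange_denom x I j = (x j - x i) * (\<Prod>l\<in>I - {i,j}. x j - x l)"
    unfolding lagrange_denom_def using prod.remove[OF fin(2) ij, of "\<lambda>p. x j - x p"] I_ij by simp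
  have Q: "(\<Prod>l\<in>I - {i,j}. \<Prod>m\<in>{i,j}. x m - x l) =
             (\<Prod>l\<in>I - {i,j}. x i - x l) * (\<Prod>l\<in>I - {i,j}. x j - x l)"
    using \<open>i \<noteq> j\<close> by (simp add: prod.distrib[symmetric])
  show ?thesis
    unfolding Li Lj Q by (simp add: power2_eq_square algebra_simps)
qed

lemma DI_diagonal_term:
  fixes x a :: "nat \<Rightarrow> real"
  assumes I: "finite I" and pos: "\<And>p. p \<in> I \<Longrightarrow> x p > 0" and inj: "inj_on x I"
    and j: "j \<in> I" and "a j \<noteq> 0"
  shows "vandermonde_on x I ^ 2 / cauchy_denom x I I *
           (K / a j * (4 * x j * (\<Prod>m\<in>I - {j}. (x m + x j)^2) / (a j * (\<Prod>m\<in>I - {j}. (x m - x j)^2)))) =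
         2 * K / a j * (1 / a j) * (vandermonde_on x I ^ 2 /
           (lagrange_denom x I j * lagrange_denom x I j * cauchy_denom x (I - {j}) (I - {j})))"
proof -
  have "cauchy_denom x (I - {j}) (I - {j}) > 0" "x j > 0" "(\<Prod>m\<in>I - {j}. (x m + x j)^2) > 0"
    using pos j by (auto intro!: cauchy_denom_pos prod_pos zero_less_power add_pos_pos)
  moreover have "lagrange_denom x I j \<noteq> 0"
    using lagrange_denom_nonzero[OF I inj j] .
  ultimately show ?thesis
    unfolding cauchy_denom_diagonal_factor[OF I j] lagrange_denom_square[symmetric]
    using \<open>a j \<noteq> 0\<close> by (simp add: field_simps)
qed

lemma DI_off_diagonal_term:
  fixes x a :: "nat \<Rightarrow> real"
  assumes I: "finite I" and pos: "\<And>p. p \<in> I \<Longrightarrow> x p > 0" and inj: "inj_on x I"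
    and i: "i \<in> I" and j: "j \<in> I" and "i \<noteq> j" and "a i \<noteq> 0" and "a j \<noteq> 0"
  shows "- (vandermonde_on x I ^ 2 / cauchy_denom x I I *
             (K / a j * (8 * x i * x j * (x i + x j) * (\<Prod>l\<in>I - {i,j}. \<Prod>m\<in>{i,j}. (x m + x l)) /
                (a i * (x j - x i)^2 * (\<Prod>l\<in>I - {i,j}. \<Prod>m\<in>{i,j}. (x m - x l)))))) =
         2 * K / a i * (1 / a j) * (vandermonde_on x I ^ 2 /
           (lagrange_denom x I i * lagrange_denom x I j * cauchy_denom x (I - {i}) (I - {j})))"
proof -
  define s where "s = x i + x j"
  have "cauchy_denom x (I - {i}) (I - {j}) > 0" "x i > 0" "x j > 0" "s > 0"
    "(\<Prod>l\<in>I - {i,j}. \<Prod>m\<in>{i,j}. x m + x l) > 0"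
    using pos i j by (auto simp: s_def intro!: cauchy_denom_pos prod_pos add_pos_pos)
  moreover have "x i \<noteq> x j"
    using inj i j \<open>i \<noteq> j\<close> by (auto dest: inj_onD)
  moreover have "(\<Prod>l\<in>I - {i,j}. \<Prod>m\<in>{i,j}. x m - x l) \<noteq> 0"
    using inj i j I by (auto simp: prod_zero_iff inj_on_eq_iff)
  ultimately show ?thesis
    unfolding cauchy_denom_off_diagonal_factor[OF I i j \<open>i \<noteq> j\<close>]
      lagrange_denom_mult_off_diagonal[OF I i j \<open>i \<noteq> j\<close>] s_def[symmetric]
    using \<open>a i \<noteq> 0\<close> \<open>a j \<noteq> 0\<close> by (simp add: field_simps)
qed

lemma vandermonde_on_square:
  "vandermonde_on x I ^ 2 = (\<Prod>(i,j)\<in>{(i,j). i \<in> I \<and> j \<in> I \<and> i < j}. (x i - x j)^2)"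
  unfolding vandermonde_on_def prod_power_distrib by (intro prod.cong refl) (auto simp: power2_commute)

lemma cauchy_denom_Times: "cauchy_denom x I I = (\<Prod>(i,j)\<in>I \<times> I. x i + x j)"
  unfolding cauchy_denom_def by (simp add: prod.cartesian_product)

text \<open>The diagonal terms of the double sum give the first sum in the paper's D(I), the off-diagonal
  terms the second.\<close>

lemma DI_eq_cauchy_rank_one_form:
  fixes d :: nat and c :: real and tau :: "nat \<Rightarrow> real"
  defines "x \<equiv> xx d tau" and "a \<equiv> aa d tau" and "K \<equiv> c * real d * kappa d"
  assumes I: "finite I" and pos: "\<And>p. p \<in> I \<Longrightarrow> x p > 0" and inj: "inj_on x I"
    and a: "\<And>p. p \<in> I \<Longrightarrow> a p \<noteq> 0"
  shows "DI d c tau I = vandermonde_on x I ^ 2 / cauchy_denom x I I +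
           (\<Sum>i\<in>I. \<Sum>j\<in>I. 2 * K / a i * (1 / a j) * (vandermonde_on x I ^ 2 /
              (lagrange_denom x I i * lagrange_denom x I j * cauchy_denom x (I - {i}) (I - {j}))))"
proof -
  let ?D = "vandermonde_on x I ^ 2 / cauchy_denom x I I"
  define G where "G i j = 2 * K / a i * (1 / a j) * (vandermonde_on x I ^ 2 /
              (lagrange_denom x I i * lagrange_denom x I j * cauchy_denom x (I - {i}) (I - {j})))" for i j
  define T1 where "T1 j = 4 * x j * (\<Prod>m\<in>I - {j}. (x m + x j)^2) / (a j * (\<Prod>m\<in>I - {j}. (x m - x j)^2))"
    for j
  define T2 where "T2 i j = 8 * x i * x j * (x i + x j) * (\<Prod>l\<in>I - {i,j}. \<Prod>m\<in>{i,j}. (x m + x l)) /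
                     (a i * (x j - x i)^2 * (\<Prod>l\<in>I - {i,j}. \<Prod>m\<in>{i,j}. (x m - x l)))" for i j
  have column: "?D * (K / a j * (T1 j - (\<Sum>i\<in>I - {j}. T2 i j))) = (\<Sum>i\<in>I. G i j)" if j: "j \<in> I" for j
  proof -
    have "?D * (K / a j * (T1 j - (\<Sum>i\<in>I - {j}. T2 i j))) =
            ?D * (K / a j * T1 j) + (\<Sum>i\<in>I - {j}. - (?D * (K / a j * T2 i j)))"
      by (simp add: algebra_simps sum_distrib_left sum_negf)
    also have "?D * (K / a j * T1 j) = G j j"
      unfolding T1_def G_def using DI_diagonal_term[where a = a and K = K, OF I pos inj j a[OF j]] .
    also have "(\<Sum>i\<in>I - {j}. - (?D * (K / a j * T2 i j))) = (\<Sum>i\<in>I - {j}. G i j)"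
      unfolding T2_def G_def using DI_off_diagonal_term[where a = a and K = K, OF I pos inj _ j _ a a[OF j]]
      by (intro sum.cong) auto
    finally show ?thesis
      by (simp add: sum.remove[OF I j])
  qed
  have "DI d c tau I = (1 + (\<Sum>j\<in>I. K / a j * (T1 j - (\<Sum>i\<in>I - {j}. T2 i j)))) * vandermonde_on x I ^ 2 /
                         cauchy_denom x I I"
    unfolding DI_def Let_def vandermonde_on_square[symmetric] cauchy_denom_Times[symmetric]
    by (simp add: x_def a_def K_def T1_def T2_def)
  also have "\<dots> = ?D + (\<Sum>j\<in>I. ?D * (K / a j * (T1 j - (\<Sum>i\<in>I - {j}. T2 i j))))"
  proof -
    have "(1 + S) * W / P = W / P + W / P * S" for S W P :: real
      by (simp add: algebra_simps add_divide_distrib)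
    then show ?thesis
      by (simp only: sum_distrib_left)
  qed
  also have "\<dots> = ?D + (\<Sum>j\<in>I. \<Sum>i\<in>I. G i j)"
    using column by simp
  finally show ?thesis
    unfolding G_def by (subst (asm) sum.swap)
qed

lemma Sigma_n_entry:
  fixes d :: nat and V c :: real and tau :: "nat \<Rightarrow> real"
  defines "x \<equiv> xx d tau" and "a \<equiv> aa d tau"
  assumes "i < n" and "j < n" and "x i + x j \<noteq> 0" and "a i \<noteq> 0" and "a j \<noteq> 0" and "c > 0"
  shows "Sigma_n n d V c tau $$ (i,j) =
           (if c \<le> 1 then V * real d * kappa d / 2 else V * real d * kappa d / (2 * c)) *
           (1 / (x i + x j) + 2 * (c * real d * kappa d) / a i * (1 / a j))"
proof -
  define X where "X = x i + x j"
  have "Sigma_n n d V c tau $$ (i,j) =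
          (if c \<le> 1 then V * real d * kappa d / (2 * X) + c * (V * real d ^ 2 * kappa d ^ 2 / (a i * a j))
           else 1 / c * (V * real d * kappa d / (2 * X)) + V * real d ^ 2 * kappa d ^ 2 / (a i * a j))"
    using assms by (simp add: Sigma_n_def Sigma_sb_def Sigma_sp_def X_def)
  then show ?thesis
    using assms unfolding X_def[symmetric] by (simp add: field_simps power2_eq_square)
qed

lemma principal_minor_Sigma_n:
  assumes d: "d \<ge> 1" and c: "c > 0"
    and tau_gt: "\<And>i. i < n \<Longrightarrow> tau i > - real d / 2"
    and tau_mono: "\<And>i j. i < j \<Longrightarrow> j < n \<Longrightarrow> tau i < tau j"
    and I: "I \<subseteq> {0..<n}"
  shows "principal_minor (\<lambda>i j. Sigma_n n d V c tau $$ (i,j)) I =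
           (if c \<le> 1 then V * real d * kappa d / 2 else V * real d * kappa d / (2 * c)) ^ card I *
           DI d c tau I"
proof -
  let ?x = "xx d tau" and ?a = "aa d tau"
  let ?u = "\<lambda>i. 2 * (c * real d * kappa d) / ?a i" and ?v = "\<lambda>j. 1 / ?a j"
  have fin: "finite I"
    using I finite_subset by blast
  have x_pos: "?x p > 0" and a_pos: "?a p > 0" if "p \<in> I" for p
    using tau_gt[of p] that I d by (auto simp: xx_def aa_def)
  have x_sum_nz: "?x p + ?x q \<noteq> 0" and a_nz: "?a p \<noteq> 0" if "p \<in> I" "q \<in> I" for p q
    using x_pos[OF that(1)] x_pos[OF that(2)] a_pos[OF that(1)] by auto
  have inj: "inj_on ?x I"
  proof (rule inj_onI)
    fix i j assume "i \<in> I" "j \<in> I" "?x i = ?x j"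
    then show "i = j"
      using I tau_mono[of i j] tau_mono[of j i] by (cases i j rule: linorder_cases) (auto simp: xx_def)
  qed
  have "principal_minor (\<lambda>i j. Sigma_n n d V c tau $$ (i,j)) I =
          principal_minor (\<lambda>i j. (if c \<le> 1 then V * real d * kappa d / 2 else V * real d * kappa d / (2 * c)) *
                                   (1 / (?x i + ?x j) + ?u i * ?v j)) I"
    using I x_sum_nz a_nz by (intro principal_minor_cong Sigma_n_entry c) auto
  also have "\<dots> = (if c \<le> 1 then V * real d * kappa d / 2 else V * real d * kappa d / (2 * c)) ^ card I *
                     principal_minor (\<lambda>i j. 1 / (?x i + ?x j) + ?u i * ?v j) I"
    by (rule principal_minor_scale)
  also note principal_minor_cauchy_rank_one[OF fin x_sum_nz inj, of ?u ?v]
  also note DI_eq_cauchy_rank_one_form[OF fin x_pos inj a_nz, symmetric]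
  finally show ?thesis .
qed

theorem corollary7p5:
  fixes n d k :: nat and V c :: real and tau :: "nat \<Rightarrow> real"
  assumes "d \<ge> 1" and "n \<ge> 2"
    and "V \<ge> 0" and "c > 0"
    and "\<And>i. i < n \<Longrightarrow> tau i > - real d / 2"
    and "\<And>i j. i < j \<Longrightarrow> j < n \<Longrightarrow> tau i < tau j"
    and "1 \<le> k" and "k \<le> n - 1"
  shows "coeff (det_shift_poly n (Sigma_n n d V c tau)) k =
           (if c \<le> 1
            then (-1)^k * Dk n d c tau k * (V * real d * kappa d / 2)^(n - k)
            else (-1)^k * Dk n d c tau k * (V * real d * kappa d / (2 * c))^(n - k))"
proof -
  define s where "s = (if c \<le> 1 then V * real d * kappa d / 2 else V * real d * kappa d / (2 * c))"
  have "coeff (det_shift_poly n (Sigma_n n d V c tau)) k =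
          (-1)^k * (\<Sum>I | I \<subseteq> {0..<n} \<and> card I = n - k. principal_minor (\<lambda>i j. Sigma_n n d V c tau $$ (i,j)) I)"
    unfolding det_shift_poly_def using \<open>k \<le> n - 1\<close> by (intro coeff_det_const_minus_X) simp
  also have "\<dots> = (-1)^k * (\<Sum>I | I \<subseteq> {0..<n} \<and> card I = n - k. s ^ (n - k) * DI d c tau I)"
    using principal_minor_Sigma_n[OF assms(1,4-6)]
    by (intro arg_cong[where f = "(*) _"] sum.cong) (auto simp: s_def)
  also have "\<dots> = (-1)^k * Dk n d c tau k * s ^ (n - k)"
    by (simp add: Dk_def sum_distrib_left sum_distrib_right ac_simps)
  finally show ?thesis
    by (simp add: s_def)
qed

end
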